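(* Let $d\ge 1$, let $f_0\in L^1(\mathbb{R}^d\times\mathbb{R}^d)\cap L^\infty(\mathbb{R}^d\times\mathbb{R}^d)$ with $f_0\ge 0$, let $\tau>0$ and $h\ge 0$. Let $F(n\tau,x,v)$ denote either (i) the exact solution $F(n\tau,x,v)=f_0(\Phi_{n\tau}^0(x,v))$ of the whole-space Vlasov–Poisson equation, or (ii) the discrete approximation $F(n\tau,x,v)=f_{\tau,h}(n\tau,x,v)=f_0(\Psi_{n\tau,h}^0(x,v))$, where $\Psi^0_{n\tau,h}$ is the Störmer–Verlet numerical flow computed with an approximate electric field $E_{\tau,h}\approx E$ (no assumption is made on the size of the error $E_{\tau,h}-E$). Then for all $n\in\mathbb{N}_0$: (a) (maximum principle) $0\le F(n\tau,x,v)\le \|f_0\|_{L^\infty(\mathbb{R}^d\times\mathbb{R}^d)}$; (b) for all $1\le p\le\infty$, $\|F(n\tau,\cdot,\cdot)\|_{L^p(\mathbb{R}^d\times\mathbb{R}^d)}=\|f_0\|_{L^p(\mathbb{R}^d\times\mathbb{R}^d)}$; (c) (kinetic entropy) $\iint_{\mathbb{R}^d\times\mathbb{R}^d}F(n\tau,x,v)\ln F(n\tau,x,v)\,dv\,dx=\iint_{\mathbb{R}^d\times\mathbb{R}^d}f_0\ln f_0\,dv\,dx$; (d) more generally, for every function $g:\mathbb{R}\to\mathbb{R}$ for which the following integrals are defined, $\iint_{\mathbb{R}^d\times\mathbb{R}^d}g(F(n\tau,x,v))\,dv\,dx=\iint_{\mathbb{R}^d\times\mathbb{R}^d}g(f_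0(x,v))\,dv\,dx$.
   Context: Whole-space Vlasov–Poisson system (no ion background): $\partial_t f+v\cdot\nabla_x f-E\cdot\nabla_v f=0$, $E=-\nabla_x\varphi$, $-\Delta_x\varphi=\rho$, $\rho(t,x)=-\int_{\mathbb{R}^d}f(t,x,v)\,dv$, $f(0,\cdot,\cdot)=f_0$; the field $E$ is assumed sufficiently smooth. Exact flow: $\Phi_s^t(x,v):=(\hat x(t),\hat v(t))$, where $(\hat x,\hat v)$ is the unique solution of $\frac{d}{dt}\hat x=\hat v$, $\frac{d}{dt}\hat v=-E(t,\hat x)$, $\hat x(s)=x$, $\hat v(s)=v$. Numerical flow: given a time step $\tau>0$ and approximate fields $E_{\tau,h}(k\tau,\cdot):\mathbb{R}^d\to\mathbb{R}^d$ (continuously differentiable), $k=0,\dots,n$, define for $k=1,\dots,n$ the single step $\Psi_{k\tau,h}^{(k-1)\tau}(x,v):=(x_{k-1},v_{k-1})$ with $v_{k-\frac12}:=v+\frac{\tau}{2}E_{\tau,h}(k\tau,x)$, $x_{k-1}:=x-\tau v_{k-\frac12}$, $v_{k-1}:=v_{k-\frac12}+\frac{\tau}{2}E_{\tau,h}((k-1)\tau,x_{k-1})$, and set $\Psi_{n\tau,h}^0:=\Psi_{\tau,h}^0\circ\Psi_{2\tau,h}^{\tau}\circ\cdots\circ\Psi_{n\tau,h}^{(n-1)\tau}$ (identity for $n=0$). *)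

theory Defs
  imports "HOL-Analysis.Analysis" "HOL-Probability.Essential_Supremum"
begin

text \<open>Phase space: pairs (x,v) in 'a \<times> 'a, where 'a is a Euclidean space (R^d, d = DIM('a)).\<close>

definition Lp_norm :: "'b measure \<Rightarrow> ereal \<Rightarrow> ('b \<Rightarrow> real) \<Rightarrow> ereal" where
  "Lp_norm M p f =
     (if p = \<infinity> then esssup M (\<lambda>z. ereal \<bar>f z\<bar>)
      else (let I = (\<integral>\<^sup>+ z. ennreal (\<bar>f z\<bar> powr real_of_ereal p) \<partial>M)
            in if I = \<infinity> then \<infinity> else ereal (enn2real I powr (1 / real_of_ereal p))))"

definition C1_map :: "('a::real_normed_vector \<Rightarrow> 'b::real_normed_vector) \<Rightarrow> bool" where
  "C1_map g \<longleftrightarrow> (\<exists>g'. (\<forall>x. (g has_derivative blinfun_apply (g' x)) (at x)) \<and> continuous_on UNIV g')"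

definition is_characteristic ::
  "(real \<Rightarrow> 'a::euclidean_space \<Rightarrow> 'a) \<Rightarrow> real \<Rightarrow> 'a \<times> 'a \<Rightarrow> (real \<Rightarrow> 'a \<times> 'a) \<Rightarrow> bool" where
  "is_characteristic E s z y \<longleftrightarrow> y s = z \<and>
     (\<forall>t. (y has_vector_derivative (snd (y t), - E t (fst (y t)))) (at t))"

definition smooth_field :: "(real \<Rightarrow> 'a::euclidean_space \<Rightarrow> 'a) \<Rightarrow> bool" where
  "smooth_field E \<longleftrightarrow>
     continuous_on UNIV (\<lambda>p. E (fst p) (snd p)) \<and>
     (\<exists>E'. (\<forall>t x. (E t has_derivative blinfun_apply (E' t x)) (at x)) \<and>
           continuous_on UNIV (\<lambda>p. E' (fst p) (snd p))) \<and>
     (\<forall>s z. \<exists>!y. is_characteristic E s z y)"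

definition exact_flow :: "(real \<Rightarrow> 'a::euclidean_space \<Rightarrow> 'a) \<Rightarrow> real \<Rightarrow> real \<Rightarrow> 'a \<times> 'a \<Rightarrow> 'a \<times> 'a" where
  "exact_flow E s t z = (THE y. is_characteristic E s z y) t"

text \<open>Single backward Stoermer-Verlet step \<Psi>_{k\<tau>,h}^{(k-1)\<tau>}; Eh k stands for E_{\<tau>,h}(k\<tau>,\<cdot>).\<close>
definition sv_step :: "real \<Rightarrow> (nat \<Rightarrow> 'a::euclidean_space \<Rightarrow> 'a) \<Rightarrow> nat \<Rightarrow> 'a \<times> 'a \<Rightarrow> 'a \<times> 'a" where
  "sv_step \<tau> Eh k z =
     (let x = fst z; v = snd z;
          vh = v + (\<tau> / 2) *\<^sub>R Eh k x;
          x' = x - \<tau> *\<^sub>R vh;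
          v' = vh + (\<tau> / 2) *\<^sub>R Eh (k - 1) x'
      in (x', v'))"

fun sv_flow :: "real \<Rightarrow> (nat \<Rightarrow> 'a::euclidean_space \<Rightarrow> 'a) \<Rightarrow> nat \<Rightarrow> 'a \<times> 'a \<Rightarrow> 'a \<times> 'a" where
  "sv_flow \<tau> Eh 0 = id"
| "sv_flow \<tau> Eh (Suc n) = sv_flow \<tau> Eh n \<circ> sv_step \<tau> Eh (Suc n)"

end

theory Submission
  imports Defs
begin

text \<open>
  Every property asserted for \<open>F n = f0 \<circ> T\<close> holds as soon as \<open>T\<close> preserves Lebesgue
  measure on phase space, since integrals, essential suprema and \<open>L\<^sup>p\<close> norms are invariant under
  such rearrangements.

  A Stoermer-Verlet step is the composition of a kick \<open>(x, v) \<mapsto> (x, v + g x)\<close>, a drift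
  \<open>(x, v) \<mapsto> (x + g v, v)\<close> and another kick; by Fubini and translation invariance every kick
  and drift preserves Lebesgue measure, whatever the field \<open>E\<^sub>\<tau>\<^sub>,\<^sub>h\<close>.

  The exact flow \<open>\<Phi>\<^sub>s\<^sup>t\<close> is the pointwise limit of the symplectic Euler scheme (a kick followed by a
  drift), whose convergence follows from a local Lipschitz bound on \<open>E\<close> and a discrete Gronwall
  argument. A pointwise limit of measure-preserving maps can only shrink the measure of preimages
  (Fatou's lemma on open sets, then outer regularity), and as \<open>\<Phi>\<^sub>t\<^sup>s\<close> inverts \<open>\<Phi>\<^sub>s\<^sup>t\<close> equality holds.
\<close>

section \<open>Measure-preserving maps\<close>

definition measure_preserving :: "'a measure \<Rightarrow> 'b measure \<Rightarrow> ('a \<Rightarrow> 'b) \<Rightarrow> bool" where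
  "measure_preserving M N T \<longleftrightarrow> T \<in> M \<rightarrow>\<^sub>M N \<and> distr M N T = N"

lemma measure_preserving_id: "measure_preserving M M id"
  by (simp add: measure_preserving_def distr_id[unfolded id_def] id_def)

lemma measure_preserving_comp:
  assumes "measure_preserving M N T" "measure_preserving N K S"
  shows "measure_preserving M K (S \<circ> T)"
proof -
  have T: "T \<in> M \<rightarrow>\<^sub>M N" and S: "S \<in> N \<rightarrow>\<^sub>M K"
    using assms by (auto simp: measure_preserving_def)
  have "distr M K (S \<circ> T) = distr (distr M N T) K S"
    using distr_distr[OF S T] by simp
  then show ?thesis
    using assms T S by (simp add: measure_preserving_def)
qed

lemma nn_integral_measure_preserving:
  assumes "measure_preserving M N T" "h \<in> borel_measurable N"
  shows "(\<integral>\<^sup>+z. h (T z) \<partial>M) = (\<integral>\<^sup>+z. h z \<partial>N)"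
  using assms nn_integral_distr[of T M N h] by (simp add: measure_preserving_def)

lemma integral_measure_preserving:
  fixes h :: "'b \<Rightarrow> 'c::{banach, second_countable_topology}"
  assumes "measure_preserving M N T" "h \<in> borel_measurable N"
  shows "(\<integral>z. h (T z) \<partial>M) = (\<integral>z. h z \<partial>N)"
  using assms integral_distr[of T M N h] by (simp add: measure_preserving_def)

lemma emeasure_vimage_measure_preserving:
  assumes "measure_preserving M N T" "A \<in> sets N"
  shows "emeasure M (T -` A \<inter> space M) = emeasure N A"
  using assms emeasure_distr[of T M N A] by (simp add: measure_preserving_def)

lemma esssup_measure_preserving:
  assumes T: "measure_preserving M N T" and h: "h \<in> borel_measurable N"
  shows "esssup M (\<lambda>z. h (T z)) = esssup N h"
proof -
  have "T \<in> M \<rightarrow>\<^sub>M N"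
    using T by (simp add: measure_preserving_def)
  then have hT: "(\<lambda>z. h (T z)) \<in> borel_measurable M"
    using h by measurable
  have "{x \<in> space M. c < h (T x)} = T -` {y \<in> space N. c < h y} \<inter> space M" for c
    using \<open>T \<in> M \<rightarrow>\<^sub>M N\<close> by (auto dest: measurable_space)
  moreover have "{y \<in> space N. c < h y} \<in> sets N" for c
    using h by measurable
  ultimately have "emeasure M {x \<in> space M. c < h (T x)} = emeasure N {y \<in> space N. c < h y}" for c
    using emeasure_vimage_measure_preserving[OF T] by presburger
  then show ?thesis
    using hT h by (simp add: esssup_eq)
qed

lemma Lp_norm_measure_preserving:
  assumes T: "measure_preserving M N T" and f: "f \<in> borel_measurable N"
  shows "Lp_norm M p (\<lambda>z. f (T z)) = Lp_norm N p f"
proof -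
  have "esssup M (\<lambda>z. ereal \<bar>f (T z)\<bar>) = esssup N (\<lambda>z. ereal \<bar>f z\<bar>)"
    by (rule esssup_measure_preserving[OF T]) (use f in measurable)
  moreover have "(\<integral>\<^sup>+z. ennreal (\<bar>f (T z)\<bar> powr real_of_ereal p) \<partial>M)
      = (\<integral>\<^sup>+z. ennreal (\<bar>f z\<bar> powr real_of_ereal p) \<partial>N)"
    by (rule nn_integral_measure_preserving[OF T]) (use f in measurable)
  ultimately show ?thesis
    by (simp add: Lp_norm_def)
qed

lemma AE_abs_le_Lp_norm_infinity: "AE z in M. ereal \<bar>f z\<bar> \<le> Lp_norm M \<infinity> f"
  by (simp add: Lp_norm_def esssup_AE)

section \<open>Kicks and drifts\<close>

definition kick :: "('a \<Rightarrow> 'b::plus) \<Rightarrow> 'a \<times> 'b \<Rightarrow> 'a \<times> 'b" where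
  "kick g = (\<lambda>(x, v). (x, v + g x))"

definition drift :: "('b \<Rightarrow> 'a::plus) \<Rightarrow> 'a \<times> 'b \<Rightarrow> 'a \<times> 'b" where
  "drift g = (\<lambda>(x, v). (x + g v, v))"

lemma measure_preserving_swap:
  "measure_preserving (lborel :: ('a::euclidean_space \<times> 'b::euclidean_space) measure) lborel prod.swap"
proof -
  have swap: "prod.swap = (\<lambda>(x :: 'a, y :: 'b). (y, x))"
    by (simp add: fun_eq_iff)
  show ?thesis
    unfolding swap measure_preserving_def lborel_prod[symmetric]
    using lborel_pair.distr_pair_swap[symmetric] measurable_pair_swap' by blast
qed

lemma measure_preserving_kick:
  fixes g :: "'a::euclidean_space \<Rightarrow> 'b::euclidean_space"
  assumes g[measurable]: "g \<in> borel_measurable borel"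
  shows "measure_preserving lborel lborel (kick g)"
proof -
  have kick_measurable: "kick g \<in> lborel \<Otimes>\<^sub>M lborel \<rightarrow>\<^sub>M lborel \<Otimes>\<^sub>M lborel"
    unfolding kick_def by measurable
  have "distr (lborel \<Otimes>\<^sub>M lborel) (lborel \<Otimes>\<^sub>M lborel) (kick g) = (lborel \<Otimes>\<^sub>M lborel :: ('a \<times> 'b) measure)"
  proof (rule measure_eqI)
    fix A assume "A \<in> sets (distr (lborel \<Otimes>\<^sub>M lborel) (lborel \<Otimes>\<^sub>M lborel) (kick g))"
    then have A[measurable]: "A \<in> sets (lborel \<Otimes>\<^sub>M lborel :: ('a \<times> 'b) measure)"
      by simp
    have fibre: "emeasure lborel (Pair x -` (kick g -` A)) = emeasure lborel (Pair x -` A)" for x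
    proof -
      have "Pair x -` (kick g -` A) = (\<lambda>v. g x + v) -` (Pair x -` A) \<inter> space lborel"
        by (auto simp: kick_def add.commute)
      also have "emeasure lborel \<dots> = emeasure (distr lborel borel ((+) (g x))) (Pair x -` A)"
        using sets_Pair1[OF A] by (simp add: emeasure_distr)
      finally show ?thesis
        by (simp add: lborel_distr_plus)
    qed
    have "kick g -` A \<in> sets (lborel \<Otimes>\<^sub>M lborel)"
      using measurable_sets[OF kick_measurable A] by (simp add: space_pair_measure)
    then have "emeasure (distr (lborel \<Otimes>\<^sub>M lborel) (lborel \<Otimes>\<^sub>M lborel) (kick g)) A
        = (\<integral>\<^sup>+x. emeasure lborel (Pair x -` (kick g -` A)) \<partial>lborel)"
      by (simp add: emeasure_distr[OF kick_measurable A] space_pair_measure lborel.emeasure_pair_measure_alt)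
    also have "\<dots> = emeasure (lborel \<Otimes>\<^sub>M lborel) A"
      by (simp add: fibre lborel.emeasure_pair_measure_alt[OF A])
    finally show "emeasure (distr (lborel \<Otimes>\<^sub>M lborel) (lborel \<Otimes>\<^sub>M lborel) (kick g)) A
        = emeasure (lborel \<Otimes>\<^sub>M lborel) A" .
  qed simp
  then show ?thesis
    using kick_measurable by (simp add: measure_preserving_def lborel_prod[symmetric])
qed

lemma measure_preserving_drift:
  fixes g :: "'b::euclidean_space \<Rightarrow> 'a::euclidean_space"
  assumes "g \<in> borel_measurable borel"
  shows "measure_preserving lborel lborel (drift g)"
proof -
  have "drift g = prod.swap \<circ> kick g \<circ> prod.swap"
    by (auto simp: fun_eq_iff drift_def kick_def)
  then show ?thesis
    using assms by (auto intro!: measure_preserving_comp[where N = lborel] measure_preserving_kick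
        measure_preserving_swap)
qed

lemma C1_map_borel_measurable:
  assumes "C1_map g"
  shows "g \<in> borel_measurable borel"
proof -
  from assms obtain g' where "\<And>x. (g has_derivative blinfun_apply (g' x)) (at x)"
    unfolding C1_map_def by blast
  then have "continuous_on UNIV g"
    by (meson has_derivative_continuous continuous_at_imp_continuous_on)
  then show ?thesis
    by (rule borel_measurable_continuous_onI)
qed

lemma sv_step_eq_kick_drift_kick:
  "sv_step \<tau> Eh k = kick (\<lambda>x. (\<tau> / 2) *\<^sub>R Eh (k - 1) x) \<circ> drift (\<lambda>v. (- \<tau>) *\<^sub>R v)
     \<circ> kick (\<lambda>x. (\<tau> / 2) *\<^sub>R Eh k x)"
  by (auto simp: fun_eq_iff sv_step_def kick_def drift_def Let_def)

lemma sv_flow_measure_preserving: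
  fixes Eh :: "nat \<Rightarrow> 'a::euclidean_space \<Rightarrow> 'a"
  assumes "\<And>k. Eh k \<in> borel_measurable borel"
  shows "measure_preserving lborel lborel (sv_flow \<tau> Eh n)"
proof (induction n)
  case 0
  show ?case
    by (simp only: sv_flow.simps measure_preserving_id)
next
  case (Suc n)
  have step: "measure_preserving lborel lborel (sv_step \<tau> Eh (Suc n))"
    unfolding sv_step_eq_kick_drift_kick using assms
    by (intro measure_preserving_comp[where N = lborel] measure_preserving_kick measure_preserving_drift) auto
  show ?case
    unfolding sv_flow.simps by (rule measure_preserving_comp[OF step Suc.IH])
qed

lemma is_characteristic_exact_flow:
  assumes "smooth_field E"
  shows "is_characteristic E s z (\<lambda>t. exact_flow E s t z)"
proof -
  have "\<exists>!y. is_characteristic E s z y"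
    using assms unfolding smooth_field_def by blast
  then have "is_characteristic E s z (THE y. is_characteristic E s z y)"
    by (rule theI')
  then show ?thesis
    by (simp add: exact_flow_def)
qed

lemma exact_flow_inverse:
  assumes "smooth_field E"
  shows "exact_flow E t s (exact_flow E s t z) = z"
proof -
  let ?y = "\<lambda>r. exact_flow E s r z"
  have y: "is_characteristic E s z ?y"
    by (rule is_characteristic_exact_flow[OF assms])
  then have "is_characteristic E t (?y t) ?y"
    by (simp add: is_characteristic_def)
  moreover have "is_characteristic E t (?y t) (\<lambda>r. exact_flow E t r (?y t))"
    by (rule is_characteristic_exact_flow[OF assms])
  moreover have "\<exists>!y. is_characteristic E t (?y t) y"
    using assms unfolding smooth_field_def by blast
  ultimately have "(\<lambda>r. exact_flow E t r (?y t)) = ?y"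
    by blast
  then show ?thesis
    using y by (metis is_characteristic_def)
qed

lemma smooth_field_borel_measurable:
  assumes "smooth_field E"
  shows "E t \<in> borel_measurable borel"
proof -
  have "continuous_on UNIV (\<lambda>p. E (fst p) (snd p))"
    using assms by (simp add: smooth_field_def)
  then have "continuous_on UNIV (\<lambda>x. (\<lambda>p. E (fst p) (snd p)) (t, x))"
    by (rule continuous_on_compose2) (auto intro: continuous_intros)
  then show ?thesis
    by (simp add: borel_measurable_continuous_onI)
qed

lemma smooth_field_lipschitz_on_compact:
  fixes E :: "real \<Rightarrow> 'a::euclidean_space \<Rightarrow> 'a"
  assumes "smooth_field E" "compact I"
  obtains L where "0 \<le> L"
    and "\<And>r a b. r \<in> I \<Longrightarrow> a \<in> cball 0 \<rho> \<Longrightarrow> b \<in> cball 0 \<rho> \<Longrightarrow>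
           norm (E r a - E r b) \<le> L * norm (a - b)"
proof -
  obtain E' where dE: "\<And>t x. (E t has_derivative blinfun_apply (E' t x)) (at x)"
    and cE': "continuous_on UNIV (\<lambda>p. E' (fst p) (snd p))"
    using assms(1) unfolding smooth_field_def by blast
  have "compact ((\<lambda>p. E' (fst p) (snd p)) ` (I \<times> cball 0 \<rho>))"
    using assms(2) by (intro compact_continuous_image continuous_on_subset[OF cE'] compact_Times) auto
  then obtain B where B: "\<And>r x. r \<in> I \<Longrightarrow> x \<in> cball 0 \<rho> \<Longrightarrow> norm (E' r x) \<le> B"
    by (fastforce dest!: compact_imp_bounded simp: bounded_iff)
  have "norm (E r a - E r b) \<le> max B 0 * norm (a - b)"
    if r: "r \<in> I" and "a \<in> cball 0 \<rho>" "b \<in> cball 0 \<rho>" for r a b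
  proof (rule differentiable_bound[where S = "cball 0 \<rho>" and f' = "\<lambda>x. blinfun_apply (E' r x)"])
    show "(E r has_derivative blinfun_apply (E' r x)) (at x within cball 0 \<rho>)" for x
      using dE has_derivative_at_withinI by blast
    show "onorm (blinfun_apply (E' r x)) \<le> max B 0" if "x \<in> cball 0 \<rho>" for x
      using B[OF r that] by (simp add: norm_blinfun.rep_eq[symmetric])
  qed (use that in auto)
  then show ?thesis
    using that[of "max B 0"] by auto
qed

section \<open>Convergence of the symplectic Euler scheme\<close>

definition symplectic_euler_step ::
    "(real \<Rightarrow> 'a \<Rightarrow> 'a::real_vector) \<Rightarrow> real \<Rightarrow> real \<Rightarrow> 'a \<times> 'a \<Rightarrow> 'a \<times> 'a" where
  "symplectic_euler_step E t d = drift (\<lambda>v. d *\<^sub>R v) \<circ> kick (\<lambda>x. - d *\<^sub>R E t x)"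

lemma symplectic_euler_step_Pair:
  "symplectic_euler_step E t d (x, v) = (x + d *\<^sub>R (v - d *\<^sub>R E t x), v - d *\<^sub>R E t x)"
  by (simp add: symplectic_euler_step_def kick_def drift_def)

fun symplectic_euler ::
    "(real \<Rightarrow> 'a \<Rightarrow> 'a::real_vector) \<Rightarrow> real \<Rightarrow> real \<Rightarrow> nat \<Rightarrow> 'a \<times> 'a \<Rightarrow> 'a \<times> 'a" where
  "symplectic_euler E s d 0 = id"
| "symplectic_euler E s d (Suc k) = symplectic_euler_step E (s + real k * d) d \<circ> symplectic_euler E s d k"

lemma symplectic_euler_measure_preserving:
  fixes E :: "real \<Rightarrow> 'a::euclidean_space \<Rightarrow> 'a"
  assumes "\<And>t. E t \<in> borel_measurable borel"
  shows "measure_preserving lborel lborel (symplectic_euler E s d k)"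
proof (induction k)
  case 0
  show ?case
    by (simp only: symplectic_euler.simps measure_preserving_id)
next
  case (Suc k)
  have step: "measure_preserving lborel lborel (symplectic_euler_step E (s + real k * d) d)"
    unfolding symplectic_euler_step_def using assms
    by (intro measure_preserving_comp[where N = lborel] measure_preserving_kick measure_preserving_drift) auto
  show ?case
    unfolding symplectic_euler.simps by (rule measure_preserving_comp[OF Suc.IH step])
qed

lemma symplectic_euler_step_error:
  fixes E :: "real \<Rightarrow> 'a::real_normed_vector \<Rightarrow> 'a"
  assumes lip: "norm (E t x - E t xa) \<le> L * norm (x - xa)"
    and dv: "norm (vb - va + d *\<^sub>R E t xa) \<le> \<bar>d\<bar> * \<epsilon>"
    and dx: "norm (xb - xa - d *\<^sub>R vb) \<le> \<bar>d\<bar> * \<epsilon>"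
    and "\<bar>d\<bar> \<le> 1" "0 \<le> L" "0 \<le> \<epsilon>"
  shows "norm (fst (symplectic_euler_step E t d (x, v)) - xb)
           + norm (snd (symplectic_euler_step E t d (x, v)) - vb)
         \<le> (1 + (3 + 2 * L) * \<bar>d\<bar>) * (norm (x - xa) + norm (v - va)) + (3 + 2 * L) * \<bar>d\<bar> * \<epsilon>"
proof -
  define v' where "v' = v - d *\<^sub>R E t x"
  define ex ev ev' where "ex = norm (x - xa)" and "ev = norm (v - va)" and "ev' = norm (v' - vb)"
  have "v' - vb = (v - va) - d *\<^sub>R (E t x - E t xa) - (vb - va + d *\<^sub>R E t xa)"
    by (simp add: v'_def algebra_simps)
  then have "ev' \<le> ev + \<bar>d\<bar> * norm (E t x - E t xa) + \<bar>d\<bar> * \<epsilon>"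
    unfolding ev'_def ev_def using dv norm_triangle_ineq4 by (smt (verit) norm_scaleR)
  also have "\<dots> \<le> ev + \<bar>d\<bar> * (L * ex) + \<bar>d\<bar> * \<epsilon>"
    using lip by (simp add: ex_def mult_left_mono)
  finally have ev': "ev' \<le> ev + \<bar>d\<bar> * (L * ex) + \<bar>d\<bar> * \<epsilon>" .
  have "x + d *\<^sub>R v' - xb = (x - xa) + d *\<^sub>R (v' - vb) - (xb - xa - d *\<^sub>R vb)"
    by (simp add: algebra_simps)
  then have ex': "norm (x + d *\<^sub>R v' - xb) \<le> ex + \<bar>d\<bar> * ev' + \<bar>d\<bar> * \<epsilon>"
    unfolding ex_def ev'_def using dx norm_triangle_ineq norm_triangle_ineq4
    by (smt (verit) norm_scaleR)
  have "\<bar>d\<bar> * (L * ex) \<le> L * ex" and "\<bar>d\<bar> * \<epsilon> \<le> \<epsilon>"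
    using assms by (simp_all add: ex_def mult_left_le_one_le)
  then have "\<bar>d\<bar> * ev' \<le> \<bar>d\<bar> * (ev + L * ex + \<epsilon>)"
    using ev' by (intro mult_left_mono) auto
  moreover have "0 \<le> \<bar>d\<bar> * ex" "0 \<le> \<bar>d\<bar> * ev" "0 \<le> L * (\<bar>d\<bar> * ev)" "0 \<le> L * (\<bar>d\<bar> * \<epsilon>)"
    using assms by (simp_all add: ex_def ev_def)
  ultimately show ?thesis
    using ev' ex' by (simp add: symplectic_euler_step_Pair v'_def[symmetric] ev'_def[symmetric]
        ex_def[symmetric] ev_def[symmetric] algebra_simps)
qed

lemma symplectic_euler_truncation_error:
  fixes E :: "real \<Rightarrow> 'a::real_normed_vector \<Rightarrow> 'a" and X V :: "real \<Rightarrow> 'a"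
  assumes dX: "\<And>r. (X has_vector_derivative V r) (at r)"
    and dV: "\<And>r. (V has_vector_derivative - E r (X r)) (at r)"
    and oscV: "\<And>r. r \<in> closed_segment a b \<Longrightarrow> norm (V r - V b) \<le> \<epsilon>"
    and oscE: "\<And>r. r \<in> closed_segment a b \<Longrightarrow> norm (E r (X r) - E a (X a)) \<le> \<epsilon>"
  shows "norm (V b - V a + (b - a) *\<^sub>R E a (X a)) \<le> \<bar>b - a\<bar> * \<epsilon>"
    and "norm (X b - X a - (b - a) *\<^sub>R V b) \<le> \<bar>b - a\<bar> * \<epsilon>"
proof -
  have "norm (V b - V a - (b - a) *\<^sub>R - E a (X a)) \<le> norm (b - a) * \<epsilon>"
  proof (rule vector_differentiable_bound_linearization[of "closed_segment a b"])
    show "norm (- E r (X r) - - E a (X a)) \<le> \<epsilon>" if "r \<in> closed_segment a b" for r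
      using oscE[OF that] by (simp add: norm_minus_commute)
  qed (auto intro: has_vector_derivative_at_within dV)
  then show "norm (V b - V a + (b - a) *\<^sub>R E a (X a)) \<le> \<bar>b - a\<bar> * \<epsilon>"
    by simp
  show "norm (X b - X a - (b - a) *\<^sub>R V b) \<le> \<bar>b - a\<bar> * \<epsilon>"
    using vector_differentiable_bound_linearization[of "closed_segment a b" X V a b b \<epsilon>]
    by (auto intro: has_vector_derivative_at_within dX oscV)
qed

lemma grid_point_in_segment:
  assumes "k \<le> Suc N"
  shows "s + real k * ((t - s) / real (Suc N)) \<in> closed_segment s t"
proof -
  define u where "u = real k / real (Suc N)"
  have "0 \<le> u" "u \<le> 1"
    using assms by (auto simp: u_def)
  moreover have "s + real k * ((t - s) / real (Suc N)) = (1 - u) *\<^sub>R s + u *\<^sub>R t"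
    by (simp add: u_def algebra_simps flip: add_divide_distrib)
  ultimately show ?thesis
    unfolding in_segment by blast
qed

lemma grid_growth_le_exp:
  assumes "0 \<le> C" "k \<le> Suc N"
  shows "(1 + C * \<bar>(t - s) / real (Suc N)\<bar>) ^ k \<le> exp (C * \<bar>t - s\<bar>)"
proof -
  have "(1 + C * \<bar>(t - s) / real (Suc N)\<bar>) ^ k \<le> (1 + C * \<bar>(t - s) / real (Suc N)\<bar>) ^ Suc N"
    using assms by (intro power_increasing) auto
  also have "\<dots> = (1 + C * \<bar>t - s\<bar> / real (Suc N)) ^ Suc N"
    by simp
  also have "\<dots> \<le> exp (C * \<bar>t - s\<bar>)"
    using assms(1) by (intro exp_ge_one_plus_x_over_n_power_n) (auto intro: order_trans[of _ 0])
  finally show ?thesis .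
qed

lemma symplectic_euler_global_error:
  fixes E :: "real \<Rightarrow> 'a::real_normed_vector \<Rightarrow> 'a" and X V :: "real \<Rightarrow> 'a"
    and s t L :: real and N :: nat
  defines "d \<equiv> (t - s) / real (Suc N)" and "C \<equiv> 3 + 2 * L"
  assumes dX: "\<And>r. (X has_vector_derivative V r) (at r)"
    and dV: "\<And>r. (V has_vector_derivative - E r (X r)) (at r)"
    and bound: "\<And>r. r \<in> closed_segment s t \<Longrightarrow> norm (X r) \<le> R"
    and lip: "\<And>r a b. r \<in> closed_segment s t \<Longrightarrow> a \<in> cball 0 (R + 1) \<Longrightarrow> b \<in> cball 0 (R + 1) \<Longrightarrow>
                norm (E r a - E r b) \<le> L * norm (a - b)"
    and oscV: "\<And>a b. a \<in> closed_segment s t \<Longrightarrow> b \<in> closed_segment s t \<Longrightarrow> \<bar>a - b\<bar> \<le> \<bar>d\<bar> \<Longrightarrow>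
                norm (V a - V b) \<le> \<epsilon>"
    and oscE: "\<And>a b. a \<in> closed_segment s t \<Longrightarrow> b \<in> closed_segment s t \<Longrightarrow> \<bar>a - b\<bar> \<le> \<bar>d\<bar> \<Longrightarrow>
                norm (E a (X a) - E b (X b)) \<le> \<epsilon>"
    and d1: "\<bar>d\<bar> \<le> 1" and L: "0 \<le> L" and \<epsilon>: "0 \<le> \<epsilon>"
    and small: "\<epsilon> * exp (C * \<bar>t - s\<bar>) \<le> 1"
  shows "k \<le> Suc N \<Longrightarrow>
           norm (fst (symplectic_euler E s d k (X s, V s)) - X (s + real k * d))
             + norm (snd (symplectic_euler E s d k (X s, V s)) - V (s + real k * d))
           \<le> \<epsilon> * ((1 + C * \<bar>d\<bar>) ^ k - 1)"
proof (induction k)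
  case 0
  show ?case
    by simp
next
  case (Suc k)
  define a b where "a = s + real k * d" and "b = s + real (Suc k) * d"
  have "b - a = d"
    by (simp add: a_def b_def algebra_simps)
  have a: "a \<in> closed_segment s t" and b: "b \<in> closed_segment s t"
    using grid_point_in_segment[of k N s t] grid_point_in_segment[of "Suc k" N s t] Suc.prems
    by (simp_all add: a_def b_def d_def)
  then have ab: "closed_segment a b \<subseteq> closed_segment s t"
    by (simp add: closed_segment_subset)
  obtain x v where xv: "symplectic_euler E s d k (X s, V s) = (x, v)"
    by fastforce
  have IH: "norm (x - X a) + norm (v - V a) \<le> \<epsilon> * ((1 + C * \<bar>d\<bar>) ^ k - 1)"
    using Suc xv by (simp add: a_def)
  also have "\<dots> \<le> \<epsilon> * exp (C * \<bar>t - s\<bar>)"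
    using grid_growth_le_exp[of C k N t s] Suc.prems L \<epsilon>
    by (intro mult_left_mono) (auto simp: C_def d_def)
  \<comment> \<open>The error bound keeps the numerical position in the ball on which \<open>E\<close> is Lipschitz.\<close>
  finally have "norm (x - X a) \<le> 1"
    using small by (smt (verit) norm_ge_zero)
  then have x: "x \<in> cball 0 (R + 1)"
    using bound[OF a] norm_triangle_sub[of x "X a"] by simp
  have Xa: "X a \<in> cball 0 (R + 1)"
    using bound[OF a] by simp
  have "norm (V r - V b) \<le> \<epsilon> \<and> norm (E r (X r) - E a (X a)) \<le> \<epsilon>" if "r \<in> closed_segment a b" for r
  proof -
    have "\<bar>r - a\<bar> \<le> \<bar>d\<bar>" "\<bar>r - b\<bar> \<le> \<bar>d\<bar>"
      using segment_bound[OF that] \<open>b - a = d\<close> by simp_all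
    then show ?thesis
      using oscV[of r b] oscE[of r a] that ab a b by auto
  qed
  then have dv: "norm (V b - V a + d *\<^sub>R E a (X a)) \<le> \<bar>d\<bar> * \<epsilon>"
    and dx: "norm (X b - X a - d *\<^sub>R V b) \<le> \<bar>d\<bar> * \<epsilon>"
    using symplectic_euler_truncation_error[where E = E and X = X and V = V and a = a and b = b, OF dX dV]
      \<open>b - a = d\<close> by auto
  have "norm (fst (symplectic_euler E s d (Suc k) (X s, V s)) - X b)
          + norm (snd (symplectic_euler E s d (Suc k) (X s, V s)) - V b)
        \<le> (1 + C * \<bar>d\<bar>) * (norm (x - X a) + norm (v - V a)) + C * \<bar>d\<bar> * \<epsilon>"
    using symplectic_euler_step_error[where E = E and t = a and xa = "X a", OF lip[OF a x Xa] dv dx d1 L \<epsilon>]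
      bound[OF a] xv
    by (simp add: a_def C_def)
  also have "\<dots> \<le> (1 + C * \<bar>d\<bar>) * (\<epsilon> * ((1 + C * \<bar>d\<bar>) ^ k - 1)) + C * \<bar>d\<bar> * \<epsilon>"
    using IH L by (intro add_right_mono mult_left_mono) (auto simp: C_def)
  also have "\<dots> = \<epsilon> * ((1 + C * \<bar>d\<bar>) ^ Suc k - 1)"
    by (simp add: algebra_simps)
  finally show ?case
    by (simp add: b_def)
qed

lemma uniformly_continuous_on_real_norm_le:
  fixes f :: "real \<Rightarrow> 'b::real_normed_vector"
  assumes "uniformly_continuous_on S f" "0 < \<epsilon>"
  obtains \<eta> where "0 < \<eta>" "\<And>a b. a \<in> S \<Longrightarrow> b \<in> S \<Longrightarrow> \<bar>a - b\<bar> < \<eta> \<Longrightarrow> norm (f a - f b) \<le> \<epsilon>"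
proof -
  obtain \<eta> where "0 < \<eta>" and \<eta>: "\<And>x x'. x \<in> S \<Longrightarrow> x' \<in> S \<Longrightarrow> dist x' x < \<eta> \<Longrightarrow> dist (f x') (f x) < \<epsilon>"
    using uniformly_continuous_onE[OF assms] by blast
  have "norm (f a - f b) \<le> \<epsilon>" if "a \<in> S" "b \<in> S" "\<bar>a - b\<bar> < \<eta>" for a b
    using \<eta>[OF that(2,1)] that(3) by (simp add: dist_norm)
  with \<open>0 < \<eta>\<close> show ?thesis
    by (rule that)
qed

lemma symplectic_euler_eventually_close:
  fixes E :: "real \<Rightarrow> 'a::real_normed_vector \<Rightarrow> 'a" and X V :: "real \<Rightarrow> 'a"
  assumes dX: "\<And>r. (X has_vector_derivative V r) (at r)"
    and dV: "\<And>r. (V has_vector_derivative - E r (X r)) (at r)"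
    and bound: "\<And>r. r \<in> closed_segment s t \<Longrightarrow> norm (X r) \<le> R"
    and lip: "\<And>r a b. r \<in> closed_segment s t \<Longrightarrow> a \<in> cball 0 (R + 1) \<Longrightarrow> b \<in> cball 0 (R + 1) \<Longrightarrow>
                norm (E r a - E r b) \<le> L * norm (a - b)"
    and L: "0 \<le> L"
    and ucV: "uniformly_continuous_on (closed_segment s t) V"
    and ucE: "uniformly_continuous_on (closed_segment s t) (\<lambda>r. E r (X r))"
    and \<epsilon>: "0 < \<epsilon>" and small: "\<epsilon> * exp ((3 + 2 * L) * \<bar>t - s\<bar>) \<le> 1"
  shows "\<forall>\<^sub>F N in sequentially. dist (symplectic_euler E s ((t - s) / real (Suc N)) (Suc N) (X s, V s)) (X t, V t)
           \<le> \<epsilon> * exp ((3 + 2 * L) * \<bar>t - s\<bar>)"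
proof -
  let ?I = "closed_segment s t"
  obtain \<eta>V where "0 < \<eta>V"
    and oscV: "\<And>a b. a \<in> ?I \<Longrightarrow> b \<in> ?I \<Longrightarrow> \<bar>a - b\<bar> < \<eta>V \<Longrightarrow> norm (V a - V b) \<le> \<epsilon>"
    using uniformly_continuous_on_real_norm_le[OF ucV \<epsilon>] by blast
  obtain \<eta>E where "0 < \<eta>E"
    and oscE: "\<And>a b. a \<in> ?I \<Longrightarrow> b \<in> ?I \<Longrightarrow> \<bar>a - b\<bar> < \<eta>E \<Longrightarrow> norm (E a (X a) - E b (X b)) \<le> \<epsilon>"
    using uniformly_continuous_on_real_norm_le[OF ucE \<epsilon>] by blast
  have "(\<lambda>N. \<bar>t - s\<bar> / real (Suc N)) \<longlonglongrightarrow> 0"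
    using LIMSEQ_Suc[OF lim_const_over_n] by simp
  then have "\<forall>\<^sub>F N in sequentially. \<bar>t - s\<bar> / real (Suc N) < min (min \<eta>V \<eta>E) 1"
    using \<open>0 < \<eta>V\<close> \<open>0 < \<eta>E\<close> by (intro order_tendstoD) auto
  then show ?thesis
  proof (rule eventually_mono)
    fix N assume N: "\<bar>t - s\<bar> / real (Suc N) < min (min \<eta>V \<eta>E) 1"
    let ?d = "(t - s) / real (Suc N)"
    let ?z = "symplectic_euler E s ?d (Suc N) (X s, V s)"
    have d: "\<bar>?d\<bar> < \<eta>V" "\<bar>?d\<bar> < \<eta>E" "\<bar>?d\<bar> \<le> 1"
      using N by (simp_all add: abs_divide)
    have "norm (V a - V b) \<le> \<epsilon>" "norm (E a (X a) - E b (X b)) \<le> \<epsilon>"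
      if "a \<in> ?I" "b \<in> ?I" "\<bar>a - b\<bar> \<le> \<bar>?d\<bar>" for a b
      using that d by (auto intro: oscV oscE)
    note err = symplectic_euler_global_error[where k = "Suc N", OF dX dV bound lip this d(3) L _ small]
    have t: "s + real (Suc N) * ?d = t"
      by simp
    have "dist ?z (X t, V t) \<le> norm (fst ?z - X t) + norm (snd ?z - V t)"
      using norm_Pair_le[of "fst ?z - X t" "snd ?z - V t"] by (cases ?z) (simp add: dist_norm)
    also have "\<dots> \<le> \<epsilon> * ((1 + (3 + 2 * L) * \<bar>?d\<bar>) ^ Suc N - 1)"
      using err \<epsilon> unfolding t by simp
    also have "\<dots> \<le> \<epsilon> * exp ((3 + 2 * L) * \<bar>t - s\<bar>)"
      using grid_growth_le_exp[of "3 + 2 * L" "Suc N" N t s] L \<epsilon> by simp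
    finally show "dist ?z (X t, V t) \<le> \<epsilon> * exp ((3 + 2 * L) * \<bar>t - s\<bar>)" .
  qed
qed

lemma symplectic_euler_tendsto_trajectory:
  fixes E :: "real \<Rightarrow> 'a::euclidean_space \<Rightarrow> 'a" and X V :: "real \<Rightarrow> 'a"
  assumes E: "smooth_field E"
    and dX: "\<And>r. (X has_vector_derivative V r) (at r)"
    and dV: "\<And>r. (V has_vector_derivative - E r (X r)) (at r)"
  shows "(\<lambda>N. symplectic_euler E s ((t - s) / real (Suc N)) (Suc N) (X s, V s)) \<longlonglongrightarrow> (X t, V t)"
proof -
  let ?I = "closed_segment s t"
  have cX: "continuous_on UNIV X" and cV: "continuous_on UNIV V"
    using dX dV by (meson has_vector_derivative_continuous continuous_at_imp_continuous_on)+
  have "bounded (X ` ?I)"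
    by (intro compact_imp_bounded compact_continuous_image continuous_on_subset[OF cX]) auto
  then obtain R where "\<forall>y \<in> X ` ?I. norm y \<le> R"
    by (auto simp: bounded_iff)
  then have bound: "\<And>r. r \<in> ?I \<Longrightarrow> norm (X r) \<le> R"
    by blast
  obtain L where L: "0 \<le> L"
    and lip: "\<And>r a b. r \<in> ?I \<Longrightarrow> a \<in> cball 0 (R + 1) \<Longrightarrow> b \<in> cball 0 (R + 1) \<Longrightarrow>
      norm (E r a - E r b) \<le> L * norm (a - b)"
    using smooth_field_lipschitz_on_compact[OF E compact_segment] by metis
  have "continuous_on UNIV (\<lambda>p. E (fst p) (snd p))"
    using E by (simp add: smooth_field_def)
  then have "continuous_on UNIV (\<lambda>r. (\<lambda>p. E (fst p) (snd p)) (r, X r))"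
    by (rule continuous_on_compose2) (auto intro: continuous_intros cX)
  then have ucE: "uniformly_continuous_on ?I (\<lambda>r. E r (X r))"
    by (intro compact_uniformly_continuous) (auto intro: continuous_on_subset)
  have ucV: "uniformly_continuous_on ?I V"
    using cV by (intro compact_uniformly_continuous) (auto intro: continuous_on_subset)
  define M where "M = exp ((3 + 2 * L) * \<bar>t - s\<bar>)"
  show ?thesis
    unfolding tendsto_iff
  proof (intro allI impI)
    fix r :: real assume "0 < r"
    define \<epsilon> where "\<epsilon> = min 1 (r / 2) / M"
    have "0 < M"
      by (simp add: M_def)
    then have "0 < \<epsilon>" "\<epsilon> * M \<le> 1" "\<epsilon> * M < r"
      using \<open>0 < r\<close> by (auto simp: \<epsilon>_def)
    then show "\<forall>\<^sub>F N in sequentially.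
        dist (symplectic_euler E s ((t - s) / real (Suc N)) (Suc N) (X s, V s)) (X t, V t) < r"
      using symplectic_euler_eventually_close[OF dX dV bound lip L ucV ucE, of \<epsilon>]
      by (auto simp: M_def elim: eventually_mono)
  qed
qed

lemma symplectic_euler_tendsto_exact_flow:
  fixes E :: "real \<Rightarrow> 'a::euclidean_space \<Rightarrow> 'a"
  assumes E: "smooth_field E"
  shows "(\<lambda>N. symplectic_euler E s ((t - s) / real (Suc N)) (Suc N) z) \<longlonglongrightarrow> exact_flow E s t z"
proof -
  define X V where "X = (\<lambda>r. fst (exact_flow E s r z))" and "V = (\<lambda>r. snd (exact_flow E s r z))"
  have char: "is_characteristic E s z (\<lambda>r. exact_flow E s r z)"
    by (rule is_characteristic_exact_flow[OF E])
  then have d: "((\<lambda>r. exact_flow E s r z) has_vector_derivative (V r, - E r (X r))) (at r)" for r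
    by (simp add: is_characteristic_def X_def V_def)
  have "(X has_vector_derivative V r) (at r)" for r
    using bounded_linear.has_vector_derivative[OF bounded_linear_fst d] by (simp add: X_def)
  moreover have "(V has_vector_derivative - E r (X r)) (at r)" for r
    using bounded_linear.has_vector_derivative[OF bounded_linear_snd d] by (simp add: V_def)
  ultimately have "(\<lambda>N. symplectic_euler E s ((t - s) / real (Suc N)) (Suc N) (X s, V s)) \<longlonglongrightarrow> (X t, V t)"
    by (rule symplectic_euler_tendsto_trajectory[OF E])
  moreover have "(X s, V s) = z" and "(X t, V t) = exact_flow E s t z"
    using char by (simp_all add: is_characteristic_def X_def V_def)
  ultimately show ?thesis
    by simp
qed

section \<open>Measure preservation of the exact flow\<close>

lemma emeasure_vimage_open_le_of_tendsto:
  fixes T :: "nat \<Rightarrow> 'a \<Rightarrow> 'b::topological_space"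
  assumes T: "\<And>n. measure_preserving M N (T n)"
    and lim: "\<And>z. z \<in> space M \<Longrightarrow> (\<lambda>n. T n z) \<longlonglongrightarrow> \<Phi> z"
    and U: "open U" "U \<in> sets N" and \<Phi>U: "\<Phi> -` U \<inter> space M \<in> sets M"
  shows "emeasure M (\<Phi> -` U \<inter> space M) \<le> emeasure N U"
proof -
  have TU: "T n -` U \<inter> space M \<in> sets M" for n
    using T U(2) by (meson measurable_sets measure_preserving_def)
  have "indicator (\<Phi> -` U \<inter> space M) z \<le> liminf (\<lambda>n. indicator (T n -` U \<inter> space M) z :: ennreal)"
    if z: "z \<in> space M" for z
  proof (cases "\<Phi> z \<in> U")
    case True
    then have "\<forall>\<^sub>F n in sequentially. T n z \<in> U"
      using topological_tendstoD[OF lim[OF z] U(1)] by blast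
    then have "\<forall>\<^sub>F n in sequentially. 1 \<le> (indicator (T n -` U \<inter> space M) z :: ennreal)"
      by (rule eventually_mono) (simp add: z)
    then show ?thesis
      using True z by (simp add: Liminf_bounded)
  qed simp
  then have "emeasure M (\<Phi> -` U \<inter> space M) \<le> (\<integral>\<^sup>+z. liminf (\<lambda>n. indicator (T n -` U \<inter> space M) z) \<partial>M)"
    using \<Phi>U by (simp add: nn_integral_mono flip: nn_integral_indicator)
  also have "\<dots> \<le> liminf (\<lambda>n. \<integral>\<^sup>+z. indicator (T n -` U \<inter> space M) z \<partial>M)"
    using TU by (intro nn_integral_liminf) simp
  also have "\<dots> = emeasure N U"
    using TU emeasure_vimage_measure_preserving[OF T U(2)] by (simp add: Liminf_const)
  finally show ?thesis .
qed

lemma emeasure_vimage_le_of_tendsto: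
  fixes T :: "nat \<Rightarrow> 'a::euclidean_space \<Rightarrow> 'a"
  assumes T: "\<And>n. measure_preserving lborel lborel (T n)"
    and lim: "\<And>z. (\<lambda>n. T n z) \<longlonglongrightarrow> \<Phi> z"
  shows "\<Phi> \<in> borel_measurable lborel"
    and "A \<in> sets lborel \<Longrightarrow> emeasure lborel (\<Phi> -` A) \<le> emeasure lborel A"
proof -
  have "T n \<in> borel_measurable lborel" for n
    using T by (simp add: measure_preserving_def)
  then show \<Phi>: "\<Phi> \<in> borel_measurable lborel"
    using lim by (rule borel_measurable_LIMSEQ_metric)
  assume A: "A \<in> sets lborel"
  show "emeasure lborel (\<Phi> -` A) \<le> emeasure lborel A"
  proof (rule ennreal_le_epsilon)
    fix e :: real assume "0 < e"
    obtain U where U: "open U" "A \<subseteq> U" "emeasure lborel (U - A) < e"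
      using outer_regular_lborel[of A e] A \<open>0 < e\<close> by auto
    have U_sets: "U \<in> sets lborel" and \<Phi>U: "\<Phi> -` U \<in> sets lborel"
      using measurable_sets[OF \<Phi>, of U] U(1) by auto
    have "emeasure lborel (\<Phi> -` A) \<le> emeasure lborel (\<Phi> -` U)"
      using U(2) \<Phi>U by (intro emeasure_mono) auto
    also have "\<dots> \<le> emeasure lborel U"
      using emeasure_vimage_open_le_of_tendsto[OF T lim U(1) U_sets] \<Phi>U by simp
    also have "U = A \<union> (U - A)"
      using U(2) by blast
    also have "emeasure lborel \<dots> \<le> emeasure lborel A + emeasure lborel (U - A)"
      using A U_sets by (intro emeasure_subadditive) auto
    also have "\<dots> \<le> emeasure lborel A + ennreal e"
      using U(3) by (intro add_left_mono) simp
    finally show "emeasure lborel (\<Phi> -` A) \<le> emeasure lborel A + ennreal e" .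
  qed
qed

lemma measure_preserving_of_vimage_le:
  assumes \<Phi>: "\<Phi> \<in> M \<rightarrow>\<^sub>M M"
    and \<Psi>: "\<And>x. x \<in> space M \<Longrightarrow> \<Psi> x \<in> space M" "\<And>x. x \<in> space M \<Longrightarrow> \<Phi> (\<Psi> x) = x"
    and le_\<Phi>: "\<And>A. A \<in> sets M \<Longrightarrow> emeasure M (\<Phi> -` A \<inter> space M) \<le> emeasure M A"
    and le_\<Psi>: "\<And>A. A \<in> sets M \<Longrightarrow> emeasure M (\<Psi> -` A \<inter> space M) \<le> emeasure M A"
  shows "measure_preserving M M \<Phi>"
proof -
  have "emeasure M (\<Phi> -` A \<inter> space M) = emeasure M A" if A: "A \<in> sets M" for A
  proof (rule antisym)
    have "A = \<Psi> -` (\<Phi> -` A \<inter> space M) \<inter> space M"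
      using sets.sets_into_space[OF A] \<Psi> by force
    then show "emeasure M A \<le> emeasure M (\<Phi> -` A \<inter> space M)"
      using le_\<Psi>[OF measurable_sets[OF \<Phi> A]] by simp
  qed (rule le_\<Phi>[OF A])
  then have "distr M M \<Phi> = M"
    using \<Phi> by (intro measure_eqI) (simp_all add: emeasure_distr)
  then show ?thesis
    using \<Phi> by (simp add: measure_preserving_def)
qed

lemma exact_flow_measure_preserving:
  fixes E :: "real \<Rightarrow> 'a::euclidean_space \<Rightarrow> 'a"
  assumes E: "smooth_field E"
  shows "measure_preserving lborel lborel (exact_flow E s t)"
proof -
  have "exact_flow E a b \<in> borel_measurable lborel \<and>
      (\<forall>A \<in> sets lborel. emeasure lborel (exact_flow E a b -` A) \<le> emeasure lborel A)" for a b
  proof -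
    have T: "measure_preserving lborel lborel (symplectic_euler E a ((b - a) / real (Suc N)) (Suc N))" for N
      using smooth_field_borel_measurable[OF E] by (rule symplectic_euler_measure_preserving)
    have lim: "(\<lambda>N. symplectic_euler E a ((b - a) / real (Suc N)) (Suc N) z) \<longlonglongrightarrow> exact_flow E a b z" for z
      by (rule symplectic_euler_tendsto_exact_flow[OF E])
    show ?thesis
      using emeasure_vimage_le_of_tendsto[OF T lim] by blast
  qed
  then show ?thesis
    using exact_flow_inverse[OF E]
    by (intro measure_preserving_of_vimage_le[where \<Psi> = "exact_flow E t s"]) auto
qed

theorem theorem2p7:
  fixes f0 :: "'a::euclidean_space \<times> 'a \<Rightarrow> real"
    and \<tau> h :: real
    and F :: "nat \<Rightarrow> 'a \<times> 'a \<Rightarrow> real"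
  assumes f0_L1: "integrable lborel f0"
    and f0_Linf: "Lp_norm lborel \<infinity> f0 < \<infinity>"
    and f0_nonneg: "\<forall>z. 0 \<le> f0 z"
    and tau_pos: "\<tau> > 0"
    and h_nonneg: "h \<ge> 0"
    and F_cases:
      "(\<exists>E. smooth_field E \<and> F = (\<lambda>n z. f0 (exact_flow E (real n * \<tau>) 0 z)))
       \<or> (\<exists>Eh. (\<forall>k. C1_map (Eh k)) \<and> F = (\<lambda>n z. f0 (sv_flow \<tau> Eh n z)))"
  shows "\<forall>n::nat.
           (\<forall>z. 0 \<le> F n z) \<and>
           (AE z in lborel. ereal (F n z) \<le> Lp_norm lborel \<infinity> f0) \<and>
           (\<forall>p::ereal. 1 \<le> p \<longrightarrow> Lp_norm lborel p (F n) = Lp_norm lborel p f0) \<and>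
           (\<integral>z. F n z * ln (F n z) \<partial>lborel) = (\<integral>z. f0 z * ln (f0 z) \<partial>lborel) \<and>
           (\<forall>g :: real \<Rightarrow> real.
              integrable lborel (\<lambda>z. g (F n z)) \<and> integrable lborel (\<lambda>z. g (f0 z)) \<longrightarrow>
              (\<integral>z. g (F n z) \<partial>lborel) = (\<integral>z. g (f0 z) \<partial>lborel))"
proof -
  have f0: "f0 \<in> borel_measurable lborel"
    using f0_L1 by (rule borel_measurable_integrable)
  have mp: "\<exists>T. measure_preserving lborel lborel T \<and> F n = (\<lambda>z. f0 (T z))" for n
    using F_cases exact_flow_measure_preserving
      sv_flow_measure_preserving[OF C1_map_borel_measurable] by blast
  have nonneg: "0 \<le> F n z" for n z
    using mp[of n] f0_nonneg by metis
  have Lp: "Lp_norm lborel p (F n) = Lp_norm lborel p f0" for n p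
    using mp[of n] Lp_norm_measure_preserving[OF _ f0] by auto
  have "AE z in lborel. ereal (F n z) \<le> Lp_norm lborel \<infinity> f0" for n
    using AE_abs_le_Lp_norm_infinity[where M = lborel and f = "F n"] Lp[where p = \<infinity>] nonneg by simp
  moreover have "(\<integral>z. g (F n z) \<partial>lborel) = (\<integral>z. g (f0 z) \<partial>lborel)"
    if "(\<lambda>z. g (f0 z)) \<in> borel_measurable lborel" for n and g :: "real \<Rightarrow> real"
    using mp[of n] integral_measure_preserving[OF _ that] by auto
  moreover have "(\<lambda>z. f0 z * ln (f0 z)) \<in> borel_measurable lborel"
    using f0 by measurable
  ultimately show ?thesis
    using nonneg Lp by (auto dest: borel_measurable_integrable)
qed

end
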